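(* Let $\vec k=(k_1,\dots,k_\ell)$ be a vector of positive integers and $\pi\in\mathcal D_{\vec k}$. Let $(t_1,\dots,t_\ell)$ be the first-row entries of $F=\eta_*(\pi)$. For each $2\le j\le\ell$, let $i$ be the index of the column of $F$ containing the entry $t_j-1$ and let $m_{ij}$ be the row index of $t_j-1$ in $F$. Then the area sequence $(a_1,\dots,a_\ell)$ of $\pi$ satisfies $a_1=0$ and $a_j=a_i+k_i-m_{ij}+1$ for $j\ge2$, and the depth labeling sequence $(d_1,\dots,d_\ell)$ of $\pi$ satisfies $d_1=0$ and $d_j=d_i+m_{ij}-1$ for $j\ge 2$.
   Context: $|\vec k|=k_1+\cdots+k_\ell$, $N=|\vec k|+\ell$. A $\vec k$-Dyck path is a word $\pi=\pi_1\cdots\pi_N$ containing the letters $S^{k_1},\dots,S^{k_\ell}$ exactly once each and in this order, together with $|\vec k|$ letters $W$, such that all starting ranks are nonnegative, where $r_1=0$, $r_{i+1}=r_i+k_j$ if $\pi_i=S^{k_j}$ and $r_{i+1}=r_i-1$ if $\pi_i=W$. $\mathcal D_{\vec k}$ is the set of such paths. The area sequence is $(a_1,\dots,a_\ell)$ where $a_j$ is the starting rank of the letter $S^{k_j}$. Filling algorithm $\eta_*$: in a tableau of $\ell$ top-justified columns, column $i$ having $k_i+1$ cells, place $1$ at the top of column 1; for $i=2,\dots,N$, call an entry active if it is currently the bottom entry of a column $i'$ not yet containing $k_{i'}+1$ entries; if $\pi_i=W$ place $i$ immediately below the largest active entry, otherwise place $i$ at the top of the first empty column. Ranking algorithm $\gamma_*$: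 column 1 of a tableau of the same shape gets ranks $0,1,\dots,k_1$ top to bottom; for $i\ge2$, if the top entry of column $i$ of $\eta_*(\pi)$ is $A+1$ and $A$ has rank $\alpha$, column $i$ gets ranks $\alpha,\alpha+1,\dots,\alpha+k_i$ top to bottom. The depth labeling sequence $(d_1,\dots,d_\ell)$ is the first row of the ranking tableau $\gamma_*(\eta_*(\pi))$. Rows are numbered from $1$ starting at the top. *)

theory Defs
  imports Main
begin

text \<open>Conventions: the vector k is a list (k!0 = k_1, ..., k!(l-1) = k_l).
  Letters: S j stands for the letter S^{k_{j+1}} (0-based index j), W for W.
  Positions in words, column indices and indices of sequences are 0-based
  in lists; entries of tableaux are the numbers 1..N as in the paper.\<close>

datatype letter = S nat | W

definition delta :: "nat list \<Rightarrow> letter \<Rightarrow> int" where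
  "delta k l = (case l of S j \<Rightarrow> int (k ! j) | W \<Rightarrow> -1)"

definition start_rank :: "nat list \<Rightarrow> letter list \<Rightarrow> nat \<Rightarrow> int" where
  "start_rank k \<pi> p = sum_list (map (delta k) (take p \<pi>))"

definition is_kdyck :: "nat list \<Rightarrow> letter list \<Rightarrow> bool" where
  "is_kdyck k \<pi> \<longleftrightarrow>
     filter (\<lambda>l. l \<noteq> W) \<pi> = map S [0..<length k] \<and>
     length (filter (\<lambda>l. l = W) \<pi>) = sum_list k \<and>
     (\<forall>p < length \<pi>. start_rank k \<pi> p \<ge> 0)"

definition area_seq :: "nat list \<Rightarrow> letter list \<Rightarrow> int list" where
  "area_seq k \<pi> =
     map (\<lambda>j. start_rank k \<pi> (THE p. p < length \<pi> \<and> \<pi> ! p = S j)) [0..<length k]"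

text \<open>Filling algorithm: a tableau is a list of columns, each column a list of
  entries from top to bottom. Column c has capacity k!c + 1.\<close>
definition active_cols :: "nat list \<Rightarrow> nat list list \<Rightarrow> nat set" where
  "active_cols k cols = {c. c < length cols \<and> cols ! c \<noteq> [] \<and> length (cols ! c) < k ! c + 1}"

definition fill_step :: "nat list \<Rightarrow> nat list list \<Rightarrow> nat \<Rightarrow> letter \<Rightarrow> nat list list" where
  "fill_step k cols i l =
     (if i = 1 then cols[0 := [1]]
      else (case l of
         W \<Rightarrow> (let m = Max ((\<lambda>c. last (cols ! c)) ` active_cols k cols);
                    c = (THE c. c \<in> active_cols k cols \<and> last (cols ! c) = m)
                in cols[c := cols ! c @ [i]])
       | S _ \<Rightarrow> (let c = (LEAST c. c < length cols \<and> cols ! c = [])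
                 in cols[c := [i]])))"

definition eta :: "nat list \<Rightarrow> letter list \<Rightarrow> nat list list" where
  "eta k \<pi> = foldl (\<lambda>cols (i, l). fill_step k cols i l) (replicate (length k) [])
                   (zip [1..<length \<pi> + 1] \<pi>)"

definition gamma :: "nat list \<Rightarrow> nat list list \<Rightarrow> nat list list" where
  "gamma k F = foldl (\<lambda>G c.
       G @ [(let A = hd (F ! c) - 1;
                 c' = (THE c'. c' < length F \<and> A \<in> set (F ! c'));
                 r = (THE r. r < length (F ! c') \<and> F ! c' ! r = A);
                 \<alpha> = G ! c' ! r
             in [\<alpha>..<\<alpha> + k ! c + 1])])
     [[0..<k ! 0 + 1]] [1..<length k]"

definition depth_seq :: "nat list \<Rightarrow> letter list \<Rightarrow> nat list" where
  "depth_seq k \<pi> = map hd (gamma k (eta k \<pi>))"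

end

theory Submission
  imports Defs
begin

(* The filling algorithm is analysed through an invariant of the partial tableau after n letters.
  Column c is headed by the position of S^{k_c}, and the ranks after the letters in column c
  decrease by one row by row, starting from a_c + k_c.  The active (not yet full) columns carry
  the rank intervals (a_c, rank after their last entry]; ordered by last entries these intervals
  are stacked and tile (0, current rank], so the largest active entry always has the current
  rank and a W placed below it continues that column.  Since t_j - 1 is the letter just before
  S^{k_j}, reading off its rank in column i gives a_j = a_i + k_i - m + 1.  The ranking algorithm
  starts column j at the rank of t_j - 1, which lies in an earlier column i; its depth label is
  therefore d_i plus the row offset m - 1. *)

lemma start_rank_0 [simp]: "start_rank k p 0 = 0"
  by (simp add: start_rank_def)

lemma start_rank_Suc:
  "n < length p \<Longrightarrow> start_rank k p (Suc n) = start_rank k p n + delta k (p ! n)"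
  by (simp add: start_rank_def take_Suc_conv_app_nth)

definition S_count :: "letter list \<Rightarrow> nat \<Rightarrow> nat" where
  "S_count p n = length (filter (\<lambda>l. l \<noteq> W) (take n p))"

lemma S_count_Suc:
  "n < length p \<Longrightarrow> S_count p (Suc n) = (if p ! n = W then S_count p n else Suc (S_count p n))"
  by (simp add: S_count_def take_Suc_conv_app_nth)

lemma S_count_mono: "n \<le> m \<Longrightarrow> S_count p n \<le> S_count p m"
proof -
  assume "n \<le> m"
  then have "take m p = take n p @ take (m - n) (drop n p)"
    by (metis le_add_diff_inverse take_add)
  then show ?thesis
    unfolding S_count_def by simp
qed

lemma kdyck_filter_take:
  assumes "is_kdyck k p"
  shows "filter (\<lambda>l. l \<noteq> W) (take n p) = map S [0..<S_count p n]" and "S_count p n \<le> length k"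
proof -
  let ?P = "\<lambda>l. l \<noteq> W"
  have "filter ?P p = filter ?P (take n p) @ filter ?P (drop n p)"
    by (metis append_take_drop_id filter_append)
  then have prefix: "filter ?P (take n p) = take (S_count p n) (filter ?P p)"
    and le: "S_count p n \<le> length (filter ?P p)"
    unfolding S_count_def by simp_all
  show "S_count p n \<le> length k"
    using le assms unfolding is_kdyck_def by simp
  then show "filter ?P (take n p) = map S [0..<S_count p n]"
    using prefix assms unfolding is_kdyck_def by (simp add: take_map min_def)
qed

lemma kdyck_S_count_length: "is_kdyck k p \<Longrightarrow> S_count p (length p) = length k"
  unfolding S_count_def is_kdyck_def by simp

lemma kdyck_nth_S:
  assumes "is_kdyck k p" "q < length p" "p ! q = S j"
  shows "j = S_count p q" and "j < length k"
proof -
  have "map S [0..<S_count p (Suc q)] = map S [0..<S_count p q] @ [S j]"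
    using kdyck_filter_take(1)[OF assms(1), of q] kdyck_filter_take(1)[OF assms(1), of "Suc q"] assms(2,3)
    by (simp add: take_Suc_conv_app_nth)
  moreover have "S_count p (Suc q) = Suc (S_count p q)"
    using S_count_Suc[OF assms(2)] assms(3) by simp
  ultimately show "j = S_count p q"
    by simp
  then show "j < length k"
    using kdyck_filter_take(2)[OF assms(1), of "Suc q"] \<open>S_count p (Suc q) = _\<close> by simp
qed

lemma kdyck_start_rank_Suc_S:
  assumes "is_kdyck k p" "n < length p" "p ! n = S j"
  shows "start_rank k p (Suc n) = start_rank k p n + int (k ! S_count p n)"
  using start_rank_Suc[OF assms(2)] kdyck_nth_S(1)[OF assms] assms(3) by (simp add: delta_def)

lemma kdyck_S_position_unique:
  assumes "is_kdyck k p" "q < length p" "p ! q = S j" "q' < length p" "p ! q' = S j"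
  shows "q = q'"
proof (rule ccontr)
  have less: False if "q1 < q2" "q2 < length p" "p ! q1 = S j" "p ! q2 = S j" for q1 q2
  proof -
    have "Suc (S_count p q1) = S_count p (Suc q1)"
      using S_count_Suc that by simp
    also have "\<dots> \<le> S_count p q2"
      using S_count_mono that(1) by simp
    finally show False
      using kdyck_nth_S(1)[OF assms(1)] that by fastforce
  qed
  assume "q \<noteq> q'"
  then show False
    using less assms by (metis linorder_neqE_nat)
qed

lemma kdyck_start_rank_length:
  assumes "is_kdyck k p"
  shows "start_rank k p (length p) = 0"
proof -
  have split: "sum_list (map f xs) = sum_list (map f (filter P xs)) + sum_list (map f (filter (\<lambda>x. \<not> P x) xs))"
    for f :: "letter \<Rightarrow> int" and P xs
    by (induction xs) auto
  have W_sum: "sum_list (map (delta k) (filter (\<lambda>l. l = W) xs)) = - int (length (filter (\<lambda>l. l = W) xs))" for xs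
    by (induction xs) (auto simp: delta_def)
  have "map (\<lambda>j. int (k ! j)) [0..<length k] = map int k"
    by (rule nth_equalityI) simp_all
  then have S_sum: "sum_list (map (delta k) (filter (\<lambda>l. l \<noteq> W) p)) = int (sum_list k)"
    using assms unfolding is_kdyck_def by (simp add: delta_def comp_def sum_list_of_nat[symmetric])
  have "start_rank k p (length p) = sum_list (map (delta k) p)"
    by (simp add: start_rank_def)
  also have "\<dots> = int (sum_list k) - int (length (filter (\<lambda>l. l = W) p))"
    using split[of "delta k" p "\<lambda>l. l \<noteq> W"] S_sum W_sum[of p] by simp
  finally show ?thesis
    using assms unfolding is_kdyck_def by simp
qed

lemma kdyck_start_rank_nonneg: "is_kdyck k p \<Longrightarrow> q \<le> length p \<Longrightarrow> 0 \<le> start_rank k p q"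
  using kdyck_start_rank_length[of k p] unfolding is_kdyck_def by (metis le_neq_implies_less order.refl)

lemma kdyck_nth_0:
  assumes "is_kdyck k p" "k \<noteq> []"
  shows "0 < length p" and "p ! 0 = S 0"
proof -
  show np: "0 < length p"
    using assms unfolding is_kdyck_def by (cases p) auto
  have "p ! 0 \<noteq> W"
  proof
    assume "p ! 0 = W"
    then have "start_rank k p 1 = -1"
      using start_rank_Suc[OF np, of k] by (simp add: delta_def)
    then show False
      using kdyck_start_rank_nonneg[OF assms(1), of 1] np by simp
  qed
  then obtain j where "p ! 0 = S j"
    by (cases "p ! 0") auto
  then show "p ! 0 = S 0"
    using kdyck_nth_S(1)[OF assms(1) np] by (simp add: S_count_def)
qed

lemma area_seq_nth:
  assumes "is_kdyck k p" "q < length p" "p ! q = S j"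
  shows "area_seq k p ! j = start_rank k p q"
proof -
  have "(THE q. q < length p \<and> p ! q = S j) = q"
    using kdyck_S_position_unique[OF assms(1)] assms(2,3) by blast
  then show ?thesis
    using kdyck_nth_S(2)[OF assms] unfolding area_seq_def by simp
qed

definition eta_prefix :: "nat list \<Rightarrow> letter list \<Rightarrow> nat \<Rightarrow> nat list list" where
  "eta_prefix k p n =
     foldl (\<lambda>cols (i, l). fill_step k cols i l) (replicate (length k) []) (zip [1..<n + 1] (take n p))"

lemma eta_prefix_0 [simp]: "eta_prefix k p 0 = replicate (length k) []"
  by (simp add: eta_prefix_def)

lemma eta_prefix_Suc:
  assumes "n < length p"
  shows "eta_prefix k p (Suc n) = fill_step k (eta_prefix k p n) (Suc n) (p ! n)"
proof -
  have "zip [1..<Suc n + 1] (take (Suc n) p) = zip [1..<n + 1] (take n p) @ [(Suc n, p ! n)]"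
    using assms by (simp add: take_Suc_conv_app_nth)
  then show ?thesis
    unfolding eta_prefix_def by simp
qed

lemma eta_eq_eta_prefix: "eta k p = eta_prefix k p (length p)"
  by (simp add: eta_def eta_prefix_def)

lemma active_cols_update_other:
  "c \<noteq> c0 \<Longrightarrow> c \<in> active_cols k (cols[c0 := col]) \<longleftrightarrow> c \<in> active_cols k cols"
  by (simp add: active_cols_def)

locale fill_shape =
  fixes k :: "nat list" and p :: "letter list" and n :: nat and cols :: "nat list list"
  assumes length_cols: "length cols = length k"
    and col_nonempty_iff: "c < length k \<Longrightarrow> cols ! c \<noteq> [] \<longleftrightarrow> c < S_count p n"
    and hd_col_S: "c < S_count p n \<Longrightarrow> p ! (hd (cols ! c) - 1) = S c"
    and col_sorted: "c < length k \<Longrightarrow> sorted_wrt (<) (cols ! c)"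
    and col_length: "c < length k \<Longrightarrow> length (cols ! c) \<le> k ! c + 1"
    and col_subset: "c < length k \<Longrightarrow> set (cols ! c) \<subseteq> {1..n}"
    and cols_disjoint: "c < length k \<Longrightarrow> c' < length k \<Longrightarrow> c \<noteq> c' \<Longrightarrow> set (cols ! c) \<inter> set (cols ! c') = {}"
    and cols_cover: "x \<in> {1..n} \<Longrightarrow> \<exists>c < length k. x \<in> set (cols ! c)"
begin

lemma col_entry_bounds: "c < length k \<Longrightarrow> x \<in> set (cols ! c) \<Longrightarrow> 1 \<le> x \<and> x \<le> n"
  using col_subset by fastforce

lemma hd_col_le: "c < length k \<Longrightarrow> x \<in> set (cols ! c) \<Longrightarrow> hd (cols ! c) \<le> x"
  using col_sorted[of c] by (cases "cols ! c") auto

lemma last_col_le: "c < length k \<Longrightarrow> cols ! c \<noteq> [] \<Longrightarrow> last (cols ! c) \<le> n"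
  using col_entry_bounds last_in_set by blast

lemma active_colsD:
  "c \<in> active_cols k cols \<Longrightarrow> c < length k \<and> cols ! c \<noteq> [] \<and> length (cols ! c) < k ! c + 1"
  using length_cols by (simp add: active_cols_def)

lemma last_active_inj:
  assumes "c \<in> active_cols k cols" "c' \<in> active_cols k cols" "last (cols ! c) = last (cols ! c')"
  shows "c = c'"
  using assms cols_disjoint active_colsD by (metis IntI empty_iff last_in_set)

lemma fill_step_S:
  assumes "S_count p n < length k"
  shows "fill_step k cols (Suc n) (S j) = cols[S_count p n := [Suc n]]"
proof (cases "n = 0")
  case True
  then show ?thesis
    by (simp add: fill_step_def S_count_def)
next
  case False
  have "(LEAST c. c < length cols \<and> cols ! c = []) = S_count p n"
    by (rule Least_equality) (use assms col_nonempty_iff length_cols in \<open>auto simp: not_less[symmetric]\<close>)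
  then show ?thesis
    using False by (simp add: fill_step_def)
qed

lemma fill_step_W:
  assumes c0: "c0 \<in> active_cols k cols"
    and top: "\<And>c. c \<in> active_cols k cols \<Longrightarrow> c \<noteq> c0 \<Longrightarrow> last (cols ! c) < last (cols ! c0)"
  shows "fill_step k cols (Suc n) W = cols[c0 := cols ! c0 @ [Suc n]]"
proof -
  have "finite (active_cols k cols)"
    by (rule finite_subset[of _ "{..<length cols}"]) (auto simp: active_cols_def)
  then have "Max ((\<lambda>c. last (cols ! c)) ` active_cols k cols) = last (cols ! c0)"
    using c0 top by (intro Max_eqI) (auto simp: le_less)
  moreover have "(THE c. c \<in> active_cols k cols \<and> last (cols ! c) = last (cols ! c0)) = c0"
    using c0 last_active_inj by blast
  moreover have "n \<noteq> 0"
    using c0 active_colsD col_entry_bounds by (metis hd_in_set le_zero_eq not_one_le_zero)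
  ultimately show ?thesis
    by (simp add: fill_step_def Let_def)
qed

lemma hd_col_S_count:
  assumes dyck: "is_kdyck k p" and n: "n \<le> length p" and c: "c < S_count p n"
  shows "c < length k" "cols ! c \<noteq> []" "1 \<le> hd (cols ! c)" "hd (cols ! c) \<le> n"
    and "S_count p (hd (cols ! c) - 1) = c"
proof -
  show c_len: "c < length k"
    using c kdyck_filter_take(2)[OF dyck, of n] by linarith
  show ne: "cols ! c \<noteq> []"
    using col_nonempty_iff[OF c_len] c by simp
  show "1 \<le> hd (cols ! c)" "hd (cols ! c) \<le> n"
    using col_entry_bounds[OF c_len hd_in_set[OF ne]] by simp_all
  then have "hd (cols ! c) - 1 < length p"
    using n by linarith
  then show "S_count p (hd (cols ! c) - 1) = c"
    using kdyck_nth_S(1)[OF dyck _ hd_col_S[OF c]] by simp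
qed

lemma hd_col_mono:
  assumes "is_kdyck k p" "n \<le> length p" "c < S_count p n" "c' < S_count p n"
    and "hd (cols ! c) \<le> hd (cols ! c')"
  shows "c \<le> c'"
  using S_count_mono[of "hd (cols ! c) - 1" "hd (cols ! c') - 1" p] hd_col_S_count(5)[OF assms(1-3)]
    hd_col_S_count(5)[OF assms(1,2,4)] assms(5) by simp

lemma hd_col_parent:
  assumes dyck: "is_kdyck k p" and n: "n \<le> length p" and j: "1 \<le> j" "j < S_count p n"
  shows "\<exists>i < j. hd (cols ! j) - 1 \<in> set (cols ! i)"
proof -
  let ?x = "hd (cols ! j) - 1"
  have j0: "0 < S_count p n"
    using j by simp
  have "hd (cols ! 0) < hd (cols ! j)"
  proof (rule ccontr)
    assume "\<not> hd (cols ! 0) < hd (cols ! j)"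
    then have "j \<le> 0"
      using hd_col_mono[OF dyck n j(2) j0] by simp
    then show False
      using j(1) by simp
  qed
  then have "?x \<in> {1..n}"
    using hd_col_S_count(3)[OF dyck n j0] hd_col_S_count(4)[OF dyck n j(2)] by auto
  then obtain i where i: "i < length k" "?x \<in> set (cols ! i)"
    using cols_cover by blast
  have i_count: "i < S_count p n"
    using col_nonempty_iff[OF i(1)] i(2) by auto
  have "hd (cols ! i) < hd (cols ! j)"
    using hd_col_le[OF i] hd_col_S_count(3)[OF dyck n j(2)] by linarith
  then have "i \<le> j" and "i \<noteq> j"
    using hd_col_mono[OF dyck n i_count j(2)] by auto
  then show ?thesis
    using i(2) by (intro exI[of _ i]) auto
qed

end

lemma fill_shape_S_step:
  assumes "fill_shape k p n cols" "is_kdyck k p" "n < length p" "p ! n = S j"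
  shows "fill_shape k p (Suc n) (cols[S_count p n := [Suc n]])"
proof -
  interpret fill_shape k p n cols by fact
  let ?s = "S_count p n" and ?new = "cols[S_count p n := [Suc n]]"
  have j: "j = ?s" "?s < length k"
    using kdyck_nth_S assms by auto
  then have empty: "cols ! ?s = []"
    using col_nonempty_iff by blast
  have new_nth: "?new ! c = (if c = ?s then [Suc n] else cols ! c)" if "c < length k" for c
    using that length_cols by simp
  have count: "S_count p (Suc n) = Suc ?s"
    using S_count_Suc assms by simp
  have fresh: "Suc n \<notin> set (cols ! c)" if "c < length k" for c
    using col_subset[OF that] by auto
  show ?thesis
  proof unfold_locales
    fix c assume "c < length k"
    then show "?new ! c \<noteq> [] \<longleftrightarrow> c < S_count p (Suc n)"
      using new_nth col_nonempty_iff count by auto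
  next
    fix c assume "c < S_count p (Suc n)"
    then show "p ! (hd (?new ! c) - 1) = S c"
      using new_nth hd_col_S count j assms(4) by (cases "c = ?s") auto
  next
    fix c c' assume "c < length k" "c' < length k" "c \<noteq> c'"
    then show "set (?new ! c) \<inter> set (?new ! c') = {}"
      using new_nth cols_disjoint fresh by auto
  next
    fix c assume c: "c < length k"
    show "set (?new ! c) \<subseteq> {1..Suc n}"
      using new_nth[OF c] col_subset[OF c] by auto
  next
    fix x assume x: "x \<in> {1..Suc n}"
    show "\<exists>c < length k. x \<in> set (?new ! c)"
    proof (cases "x = Suc n")
      case False
      then obtain c where "c < length k" "x \<in> set (cols ! c)"
        using x cols_cover by fastforce
      then show ?thesis
        using new_nth empty by (intro exI[of _ c]) auto
    qed (use new_nth j in auto)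
  qed (use length_cols new_nth col_sorted col_length in auto)
qed

(* Entries are 1-based positions: the entry x stands for the letter p ! (x - 1), so
  start_rank k p x is the rank after that letter, and start_rank k p (hd (cols ! c) - 1) is the
  starting rank of S^{k_c}. *)
locale fill_ranked = fill_shape +
  assumes col_rank: "c < length k \<Longrightarrow> q < length (cols ! c) \<Longrightarrow>
      start_rank k p (cols ! c ! q) = start_rank k p (hd (cols ! c) - 1) + int (k ! c) - int q"
begin

lemma active_base_less_last:
  assumes "c \<in> active_cols k cols"
  shows "start_rank k p (hd (cols ! c) - 1) < start_rank k p (last (cols ! c))"
proof -
  let ?q = "length (cols ! c) - 1"
  have c: "c < length k" "cols ! c \<noteq> []" "length (cols ! c) \<le> k ! c"
    using active_colsD[OF assms] by auto
  then have "?q < length (cols ! c)" "?q < k ! c" "last (cols ! c) = cols ! c ! ?q"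
    by (simp_all add: last_conv_nth less_le_trans[of _ "length (cols ! c)"])
  then show ?thesis
    using col_rank[OF c(1), of ?q] by simp
qed

end

locale fill_invariant = fill_ranked +
  assumes active_base_nonneg: "c \<in> active_cols k cols \<Longrightarrow> 0 \<le> start_rank k p (hd (cols ! c) - 1)"
    and active_last_le: "c \<in> active_cols k cols \<Longrightarrow> start_rank k p (last (cols ! c)) \<le> start_rank k p n"
    and active_nested: "c \<in> active_cols k cols \<Longrightarrow> c' \<in> active_cols k cols \<Longrightarrow>
      last (cols ! c) < last (cols ! c') \<Longrightarrow> start_rank k p (last (cols ! c)) \<le> start_rank k p (hd (cols ! c') - 1)"
    and active_cover: "0 < v \<Longrightarrow> v \<le> start_rank k p n \<Longrightarrow>
      \<exists>c \<in> active_cols k cols. start_rank k p (hd (cols ! c) - 1) < v \<and> v \<le> start_rank k p (last (cols ! c))"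
begin

lemma top_active_column:
  assumes "0 < start_rank k p n"
  obtains c0 where "c0 \<in> active_cols k cols"
    and "start_rank k p (last (cols ! c0)) = start_rank k p n"
    and "start_rank k p (hd (cols ! c0) - 1) < start_rank k p n"
    and "\<And>c. c \<in> active_cols k cols \<Longrightarrow> c \<noteq> c0 \<Longrightarrow> last (cols ! c) < last (cols ! c0)"
proof -
  obtain c0 where c0: "c0 \<in> active_cols k cols" "start_rank k p (hd (cols ! c0) - 1) < start_rank k p n"
      "start_rank k p n \<le> start_rank k p (last (cols ! c0))"
    using active_cover[OF assms order.refl] by blast
  have last_c0: "start_rank k p (last (cols ! c0)) = start_rank k p n"
    using active_last_le[OF c0(1)] c0(3) by simp
  have "last (cols ! c) < last (cols ! c0)" if c: "c \<in> active_cols k cols" "c \<noteq> c0" for c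
  proof (rule ccontr)
    assume "\<not> last (cols ! c) < last (cols ! c0)"
    then have "last (cols ! c0) < last (cols ! c)"
      using last_active_inj[OF c(1) c0(1)] c(2) by fastforce
    then show False
      using active_nested[OF c0(1) c(1)] active_base_less_last[OF c(1)] active_last_le[OF c(1)] last_c0
      by simp
  qed
  then show ?thesis
    using that c0 last_c0 by blast
qed

end

lemma fill_invariant_empty: "fill_invariant k p 0 (replicate (length k) [])"
  by unfold_locales (auto simp: S_count_def active_cols_def)

lemma fill_ranked_S_step:
  assumes "fill_ranked k p n cols" "is_kdyck k p" "n < length p" "p ! n = S j"
  shows "fill_ranked k p (Suc n) (cols[S_count p n := [Suc n]])"
proof -
  interpret fill_ranked k p n cols by fact
  let ?R = "start_rank k p" and ?s = "S_count p n" and ?new = "cols[S_count p n := [Suc n]]"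
  have "?s < length k"
    using kdyck_nth_S assms(2-4) by blast
  then have new_s: "?new ! ?s = [Suc n]"
    using length_cols by simp
  show ?thesis
  proof (intro fill_ranked.intro fill_ranked_axioms.intro)
    show "fill_shape k p (Suc n) ?new"
      using fill_shape_S_step assms(2-4) fill_shape_axioms by blast
    fix c q assume "c < length k" "q < length (?new ! c)"
    then show "?R (?new ! c ! q) = ?R (hd (?new ! c) - 1) + int (k ! c) - int q"
      using new_s col_rank kdyck_start_rank_Suc_S[OF assms(2-4)] by (cases "c = ?s") auto
  qed
qed

lemma fill_invariant_S_step:
  assumes inv: "fill_invariant k p n cols" and dyck: "is_kdyck k p" and pos: "\<forall>x \<in> set k. 0 < x"
    and n: "n < length p" and letter: "p ! n = S j"
  shows "fill_invariant k p (Suc n) (cols[S_count p n := [Suc n]])"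
proof -
  interpret fill_invariant k p n cols by fact
  let ?R = "start_rank k p" and ?s = "S_count p n" and ?new = "cols[S_count p n := [Suc n]]"
  have s: "?s < length k" "0 < k ! ?s" "cols ! ?s = []"
    using kdyck_nth_S[OF dyck n letter] pos col_nonempty_iff by auto
  have new_s: "?new ! ?s = [Suc n]" and new_active: "?s \<in> active_cols k ?new"
    using s length_cols by (simp_all add: active_cols_def)
  have rank_Suc: "?R (Suc n) = ?R n + int (k ! ?s)"
    using kdyck_start_rank_Suc_S[OF dyck n letter] .
  have old_active: "c \<in> active_cols k cols" if "c \<in> active_cols k ?new" "c \<noteq> ?s" for c
    using that active_cols_update_other by blast
  show ?thesis
  proof (intro fill_invariant.intro fill_invariant_axioms.intro)
    show "fill_ranked k p (Suc n) ?new"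
      using fill_ranked_S_step dyck n letter fill_ranked_axioms by blast
  next
    fix c assume c: "c \<in> active_cols k ?new"
    show "0 \<le> ?R (hd (?new ! c) - 1)"
      using old_active[OF c] active_base_nonneg new_s kdyck_start_rank_nonneg[OF dyck] n
      by (cases "c = ?s") auto
  next
    fix c assume c: "c \<in> active_cols k ?new"
    show "?R (last (?new ! c)) \<le> ?R (Suc n)"
      using old_active[OF c] active_last_le[of c] new_s rank_Suc by (cases "c = ?s") auto
  next
    fix c c' assume c: "c \<in> active_cols k ?new" and c': "c' \<in> active_cols k ?new"
      and lt: "last (?new ! c) < last (?new ! c')"
    have "c \<noteq> ?s"
      using lt new_s last_col_le active_colsD old_active[OF c'] by (cases "c' = ?s") fastforce+
    then show "?R (last (?new ! c)) \<le> ?R (hd (?new ! c') - 1)"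
      using lt new_s old_active[OF c] old_active[OF c'] active_last_le active_nested
      by (cases "c' = ?s") auto
  next
    fix v assume v: "0 < v" "v \<le> ?R (Suc n)"
    show "\<exists>c \<in> active_cols k ?new. ?R (hd (?new ! c) - 1) < v \<and> v \<le> ?R (last (?new ! c))"
    proof (cases "v \<le> ?R n")
      case True
      then obtain c where c: "c \<in> active_cols k cols" "?R (hd (cols ! c) - 1) < v \<and> v \<le> ?R (last (cols ! c))"
        using active_cover[OF v(1)] by blast
      moreover have "c \<noteq> ?s"
        using c(1) s(3) active_colsD by auto
      ultimately show ?thesis
        using active_cols_update_other by (intro bexI[of _ c]) auto
    qed (use v new_active new_s rank_Suc in \<open>intro bexI[of _ ?s], auto\<close>)
  qed
qed

lemma fill_shape_W_step:
  assumes "fill_shape k p n cols" "n < length p" "p ! n = W" "c0 \<in> active_cols k cols"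
  shows "fill_shape k p (Suc n) (cols[c0 := cols ! c0 @ [Suc n]])"
proof -
  interpret fill_shape k p n cols by fact
  let ?new = "cols[c0 := cols ! c0 @ [Suc n]]"
  have c0: "c0 < length k" "cols ! c0 \<noteq> []" "length (cols ! c0) < k ! c0 + 1"
    using active_colsD assms(4) by auto
  have new_nth: "?new ! c = (if c = c0 then cols ! c0 @ [Suc n] else cols ! c)" if "c < length k" for c
    using that length_cols by simp
  have count: "S_count p (Suc n) = S_count p n"
    using S_count_Suc assms(2,3) by simp
  have fresh: "Suc n \<notin> set (cols ! c)" if "c < length k" for c
    using col_entry_bounds[OF that] by fastforce
  show ?thesis
  proof unfold_locales
    fix c assume "c < S_count p (Suc n)"
    then show "p ! (hd (?new ! c) - 1) = S c"
      using hd_col_S count c0 length_cols by (cases "c = c0") auto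
  next
    fix c assume c: "c < length k"
    show "sorted_wrt (<) (?new ! c)"
      using new_nth[OF c] col_sorted[OF c] col_entry_bounds[OF c] by (auto simp: sorted_wrt_append less_Suc_eq_le)
  next
    fix c assume c: "c < length k"
    show "set (?new ! c) \<subseteq> {1..Suc n}"
      using new_nth[OF c] col_subset[OF c] by auto
  next
    fix c c' assume "c < length k" "c' < length k" "c \<noteq> c'"
    then show "set (?new ! c) \<inter> set (?new ! c') = {}"
      using new_nth cols_disjoint fresh by auto
  next
    fix x assume x: "x \<in> {1..Suc n}"
    show "\<exists>c < length k. x \<in> set (?new ! c)"
    proof (cases "x = Suc n")
      case False
      then obtain c where "c < length k" "x \<in> set (cols ! c)"
        using x cols_cover by fastforce
      then show ?thesis
        using new_nth by (intro exI[of _ c]) auto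
    qed (use new_nth c0 in auto)
  qed (use length_cols new_nth col_nonempty_iff count col_length c0 in auto)
qed

lemma fill_ranked_W_step:
  assumes "fill_ranked k p n cols" "n < length p" "p ! n = W" "c0 \<in> active_cols k cols"
    and last_c0: "start_rank k p (last (cols ! c0)) = start_rank k p n"
  shows "fill_ranked k p (Suc n) (cols[c0 := cols ! c0 @ [Suc n]])"
proof -
  interpret fill_ranked k p n cols by fact
  let ?R = "start_rank k p" and ?new = "cols[c0 := cols ! c0 @ [Suc n]]"
  have c0: "c0 < length k" "cols ! c0 \<noteq> []"
    using active_colsD assms(4) by auto
  have "int (length (cols ! c0) - 1) = int (length (cols ! c0)) - 1"
    using c0(2) by (cases "cols ! c0") auto
  then have rank_new: "?R (Suc n) = ?R (hd (cols ! c0) - 1) + int (k ! c0) - int (length (cols ! c0))"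
    using start_rank_Suc[OF assms(2)] assms(3) last_c0 col_rank[OF c0(1), of "length (cols ! c0) - 1"] c0(2)
    by (simp add: delta_def last_conv_nth)
  show ?thesis
  proof (intro fill_ranked.intro fill_ranked_axioms.intro)
    show "fill_shape k p (Suc n) ?new"
      using fill_shape_W_step assms(2-4) fill_shape_axioms by blast
    fix c q assume "c < length k" "q < length (?new ! c)"
    then show "?R (?new ! c ! q) = ?R (hd (?new ! c) - 1) + int (k ! c) - int q"
      using col_rank c0 length_cols rank_new by (cases "c = c0") (auto simp: nth_append less_Suc_eq)
  qed
qed

lemma fill_invariant_W_step:
  assumes "fill_invariant k p n cols" and n: "n < length p" and letter: "p ! n = W"
    and c0: "c0 \<in> active_cols k cols"
    and last_c0: "start_rank k p (last (cols ! c0)) = start_rank k p n"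
    and base_c0: "start_rank k p (hd (cols ! c0) - 1) < start_rank k p n"
    and top: "\<And>c. c \<in> active_cols k cols \<Longrightarrow> c \<noteq> c0 \<Longrightarrow> last (cols ! c) < last (cols ! c0)"
  shows "fill_invariant k p (Suc n) (cols[c0 := cols ! c0 @ [Suc n]])"
proof -
  interpret fill_invariant k p n cols by fact
  let ?R = "start_rank k p" and ?new = "cols[c0 := cols ! c0 @ [Suc n]]"
  have ranked: "fill_ranked k p (Suc n) ?new"
    using fill_ranked_W_step n letter c0 last_c0 fill_ranked_axioms by blast
  then interpret new: fill_ranked k p "Suc n" ?new .
  have c0_col: "c0 < length k" "cols ! c0 \<noteq> []" "?new ! c0 = cols ! c0 @ [Suc n]"
    using active_colsD[OF c0] length_cols by auto
  have rank_Suc: "?R (Suc n) = ?R n - 1"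
    using start_rank_Suc[OF n] letter by (simp add: delta_def)
  have old_active: "c \<in> active_cols k cols" if "c \<in> active_cols k ?new" "c \<noteq> c0" for c
    using that active_cols_update_other by blast
  have below_c0: "?R (last (cols ! c)) < ?R n" if "c \<in> active_cols k cols" "c \<noteq> c0" for c
    using active_nested[OF that(1) c0 top[OF that]] base_c0 by simp
  show ?thesis
  proof (intro fill_invariant.intro fill_invariant_axioms.intro ranked)
    fix c assume "c \<in> active_cols k ?new"
    then show "0 \<le> ?R (hd (?new ! c) - 1)"
      using old_active active_base_nonneg[OF c0] active_base_nonneg c0_col by (cases "c = c0") auto
  next
    fix c assume "c \<in> active_cols k ?new"
    then show "?R (last (?new ! c)) \<le> ?R (Suc n)"
      using old_active below_c0 c0_col rank_Suc by (cases "c = c0") force+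
  next
    fix c c' assume c: "c \<in> active_cols k ?new" and c': "c' \<in> active_cols k ?new"
      and lt: "last (?new ! c) < last (?new ! c')"
    have "c \<noteq> c0"
      using lt c0_col last_col_le active_colsD old_active[OF c'] by (cases "c' = c0") fastforce+
    then show "?R (last (?new ! c)) \<le> ?R (hd (?new ! c') - 1)"
      using lt c0_col old_active[OF c] old_active[OF c'] top active_nested[OF _ c0] active_nested
      by (cases "c' = c0") auto
  next
    fix v assume v: "0 < v" "v \<le> ?R (Suc n)"
    then obtain c where c: "c \<in> active_cols k cols" "?R (hd (cols ! c) - 1) < v" "v \<le> ?R (last (cols ! c))"
      using active_cover rank_Suc by force
    show "\<exists>c \<in> active_cols k ?new. ?R (hd (?new ! c) - 1) < v \<and> v \<le> ?R (last (?new ! c))"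
    proof (cases "c = c0")
      case True
      have "?R (Suc n) = ?R (hd (cols ! c0) - 1) + int (k ! c0) - int (length (cols ! c0))"
        using new.col_rank[OF c0_col(1), of "length (cols ! c0)"] c0_col by simp
      then have "length (cols ! c0) < k ! c0"
        using c(2) v(2) unfolding True by linarith
      then have "c0 \<in> active_cols k ?new"
        using c0_col length_cols by (simp add: active_cols_def)
      then show ?thesis
        using True c v c0_col by (intro bexI[of _ c0]) auto
    qed (use c active_cols_update_other in \<open>intro bexI[of _ c], auto\<close>)
  qed
qed

lemma fill_invariant_eta_prefix:
  assumes dyck: "is_kdyck k p" and pos: "\<forall>x \<in> set k. 0 < x"
  shows "n \<le> length p \<Longrightarrow> fill_invariant k p n (eta_prefix k p n)"
proof (induction n)
  case 0
  then show ?case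
    using fill_invariant_empty by simp
next
  case (Suc n)
  then have n: "n < length p" and inv: "fill_invariant k p n (eta_prefix k p n)"
    by auto
  interpret fill_invariant k p n "eta_prefix k p n"
    by (fact inv)
  show ?case
  proof (cases "p ! n")
    case (S j)
    then show ?thesis
      using fill_invariant_S_step[OF inv dyck pos n S] fill_step_S kdyck_nth_S[OF dyck n S]
      by (simp add: eta_prefix_Suc[OF n])
  next
    case W
    have rank_pos: "0 < start_rank k p n"
      using kdyck_start_rank_nonneg[OF dyck, of "Suc n"] start_rank_Suc[OF n] n W by (simp add: delta_def)
    obtain c0 where "c0 \<in> active_cols k (eta_prefix k p n)"
      "start_rank k p (last (eta_prefix k p n ! c0)) = start_rank k p n"
      "start_rank k p (hd (eta_prefix k p n ! c0) - 1) < start_rank k p n"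
      "\<And>c. c \<in> active_cols k (eta_prefix k p n) \<Longrightarrow> c \<noteq> c0 \<Longrightarrow>
         last (eta_prefix k p n ! c) < last (eta_prefix k p n ! c0)"
      using top_active_column[OF rank_pos] by blast
    then show ?thesis
      using fill_invariant_W_step[OF inv n W] fill_step_W W by (simp add: eta_prefix_Suc[OF n])
  qed
qed

definition gamma_step :: "nat list \<Rightarrow> nat list list \<Rightarrow> nat list list \<Rightarrow> nat \<Rightarrow> nat list list" where
  "gamma_step k F G c =
     G @ [(let A = hd (F ! c) - 1;
               c' = (THE c'. c' < length F \<and> A \<in> set (F ! c'));
               r = (THE r. r < length (F ! c') \<and> F ! c' ! r = A);
               \<alpha> = G ! c' ! r
           in [\<alpha>..<\<alpha> + k ! c + 1])]"

definition gamma_prefix :: "nat list \<Rightarrow> nat list list \<Rightarrow> nat \<Rightarrow> nat list list" where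
  "gamma_prefix k F n = foldl (gamma_step k F) [[0..<k ! 0 + 1]] [1..<n]"

lemma gamma_eq_gamma_prefix: "gamma k F = gamma_prefix k F (length k)"
  unfolding gamma_def gamma_prefix_def gamma_step_def by (rule refl)

lemma gamma_prefix_Suc: "1 \<le> n \<Longrightarrow> gamma_prefix k F (Suc n) = gamma_step k F (gamma_prefix k F n) n"
  by (simp add: gamma_prefix_def)

locale parent_columns =
  fixes k :: "nat list" and F :: "nat list list"
  assumes length_F: "length F = length k"
    and distinct_col: "c < length k \<Longrightarrow> distinct (F ! c)"
    and length_col: "c < length k \<Longrightarrow> length (F ! c) \<le> k ! c + 1"
    and disjoint_cols: "c < length k \<Longrightarrow> c' < length k \<Longrightarrow> c \<noteq> c' \<Longrightarrow> set (F ! c) \<inter> set (F ! c') = {}"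
    and parent_col: "1 \<le> c \<Longrightarrow> c < length k \<Longrightarrow> \<exists>i < c. hd (F ! c) - 1 \<in> set (F ! i)"
begin

lemma entry_position_unique:
  assumes "i < length k" "r < length (F ! i)" "i' < length k" "r' < length (F ! i')"
    and "F ! i ! r = F ! i' ! r'"
  shows "i = i'" and "r = r'"
proof -
  show "i = i'"
    using assms disjoint_cols by (metis disjoint_iff nth_mem)
  then show "r = r'"
    using assms distinct_col nth_eq_iff_index_eq by metis
qed

lemma gamma_step_parent:
  assumes "i < length k" "r < length (F ! i)" "F ! i ! r = hd (F ! c) - 1"
  shows "gamma_step k F G c = G @ [[G ! i ! r..<G ! i ! r + k ! c + 1]]"
proof -
  have "(THE c'. c' < length F \<and> hd (F ! c) - 1 \<in> set (F ! c')) = i"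
    using assms entry_position_unique length_F by (auto simp: in_set_conv_nth)
  moreover have "(THE r'. r' < length (F ! i) \<and> F ! i ! r' = hd (F ! c) - 1) = r"
    using assms entry_position_unique by auto
  ultimately show ?thesis
    by (simp add: gamma_step_def Let_def)
qed

lemma parent_less:
  assumes "1 \<le> c" "c < length k" "i < length k" "r < length (F ! i)" "F ! i ! r = hd (F ! c) - 1"
  shows "i < c"
proof -
  obtain i' r' where "i' < c" "r' < length (F ! i')" "F ! i' ! r' = hd (F ! c) - 1"
    using parent_col[OF assms(1,2)] by (auto simp: in_set_conv_nth)
  then show ?thesis
    using entry_position_unique[OF assms(3,4)] assms(2,5) by (metis order.strict_trans)
qed

lemma gamma_prefix_Suc_intervals:
  assumes n: "1 \<le> n" "n < length k"
    and G: "gamma_prefix k F n = map (\<lambda>c. [h c..<h c + k ! c + 1]) [0..<n]"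
  obtains i r where "i < n" "r < length (F ! i)" "F ! i ! r = hd (F ! n) - 1"
    and "gamma_prefix k F (Suc n) = map (\<lambda>c. [(h(n := h i + r)) c..<(h(n := h i + r)) c + k ! c + 1]) [0..<Suc n]"
proof -
  obtain i where i: "i < n" "hd (F ! n) - 1 \<in> set (F ! i)"
    using parent_col[OF n] by blast
  then obtain r where ir: "i < length k" "r < length (F ! i)" "F ! i ! r = hd (F ! n) - 1"
    using n by (metis in_set_conv_nth order.strict_trans)
  have "r < k ! i + 1"
    using length_col[OF ir(1)] ir(2) by simp
  then have "gamma_prefix k F n ! i ! r = h i + r"
    using G i(1) by (simp del: upt_Suc)
  then have "gamma_prefix k F (Suc n) = map (\<lambda>c. [(h(n := h i + r)) c..<(h(n := h i + r)) c + k ! c + 1]) [0..<Suc n]"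
    using gamma_prefix_Suc[OF n(1)] gamma_step_parent[OF ir] G i(1) by (simp cong: map_cong)
  then show ?thesis
    using that i(1) ir(2,3) by blast
qed

lemma gamma_prefix_intervals:
  assumes "1 \<le> n" "n \<le> length k"
  shows "\<exists>h. gamma_prefix k F n = map (\<lambda>c. [h c..<h c + k ! c + 1]) [0..<n] \<and> h 0 = 0 \<and>
    (\<forall>c i r. 1 \<le> c \<and> c < n \<and> i < length k \<and> r < length (F ! i) \<and> F ! i ! r = hd (F ! c) - 1
       \<longrightarrow> h c = h i + r)"
  using assms
proof (induction n)
  case (Suc n)
  show ?case
  proof (cases "n = 0")
    case True
    then show ?thesis
      by (intro exI[of _ "\<lambda>_. 0"]) (simp add: gamma_prefix_def)
  next
    case False
    then have n: "1 \<le> n" "n < length k"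
      using Suc.prems by auto
    obtain h where G: "gamma_prefix k F n = map (\<lambda>c. [h c..<h c + k ! c + 1]) [0..<n]"
      and h0: "h 0 = 0"
      and h_parent: "\<And>c i r. 1 \<le> c \<Longrightarrow> c < n \<Longrightarrow> i < length k \<Longrightarrow> r < length (F ! i) \<Longrightarrow>
        F ! i ! r = hd (F ! c) - 1 \<Longrightarrow> h c = h i + r"
      using Suc n by auto
    obtain i r where ir: "i < n" "r < length (F ! i)" "F ! i ! r = hd (F ! n) - 1"
      and G': "gamma_prefix k F (Suc n) = map (\<lambda>c. [(h(n := h i + r)) c..<(h(n := h i + r)) c + k ! c + 1]) [0..<Suc n]"
      using gamma_prefix_Suc_intervals[OF n G] by blast
    have "(h(n := h i + r)) c = (h(n := h i + r)) i' + r'"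
      if c: "1 \<le> c" "c < Suc n" and i': "i' < length k" "r' < length (F ! i')" "F ! i' ! r' = hd (F ! c) - 1"
      for c i' r'
    proof (cases "c = n")
      case True
      then have "i' = i" "r' = r"
        using entry_position_unique[OF i'(1,2) _ ir(2)] ir(1,3) i'(3) n(2) by simp_all
      then show ?thesis
        using True ir(1) by simp
    qed (use c i' h_parent parent_less[OF c(1) _ i'] n(2) in simp)
    then show ?thesis
      using G' h0 n by (intro exI[of _ "h(n := h i + r)"]) auto
  qed
qed simp

lemma gamma_heads:
  assumes "k \<noteq> []"
  shows "length (gamma k F) = length k" and "hd (gamma k F ! 0) = 0"
    and "\<And>c i r. 1 \<le> c \<Longrightarrow> c < length k \<Longrightarrow> i < length k \<Longrightarrow> r < length (F ! i) \<Longrightarrow>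
      F ! i ! r = hd (F ! c) - 1 \<Longrightarrow> hd (gamma k F ! c) = hd (gamma k F ! i) + r"
proof -
  have "1 \<le> length k"
    using assms by (cases k) auto
  then obtain h where G: "gamma k F = map (\<lambda>c. [h c..<h c + k ! c + 1]) [0..<length k]" and h0: "h 0 = 0"
    and h_parent: "\<And>c i r. 1 \<le> c \<Longrightarrow> c < length k \<Longrightarrow> i < length k \<Longrightarrow> r < length (F ! i) \<Longrightarrow>
      F ! i ! r = hd (F ! c) - 1 \<Longrightarrow> h c = h i + r"
    using gamma_prefix_intervals[OF _ order.refl] unfolding gamma_eq_gamma_prefix by blast
  show "length (gamma k F) = length k"
    using G by simp
  have hd_gamma: "hd (gamma k F ! c) = h c" if "c < length k" for c
    using that G by (simp del: upt_Suc)
  show "hd (gamma k F ! 0) = 0"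
    using hd_gamma h0 assms by simp
  show "hd (gamma k F ! c) = hd (gamma k F ! i) + r"
    if "1 \<le> c" "c < length k" "i < length k" "r < length (F ! i)" "F ! i ! r = hd (F ! c) - 1" for c i r
    using that hd_gamma h_parent by simp
qed

end

lemma eta_fill_invariant: "is_kdyck k p \<Longrightarrow> \<forall>x \<in> set k. 0 < x \<Longrightarrow> fill_invariant k p (length p) (eta k p)"
  unfolding eta_eq_eta_prefix using fill_invariant_eta_prefix by blast

lemma eta_parent_columns:
  assumes dyck: "is_kdyck k p" and pos: "\<forall>x \<in> set k. 0 < x"
  shows "parent_columns k (eta k p)"
proof -
  interpret fill_invariant k p "length p" "eta k p"
    using eta_fill_invariant[OF dyck pos] .
  show ?thesis
    using length_cols col_sorted col_length cols_disjoint hd_col_parent[OF dyck order.refl] kdyck_S_count_length[OF dyck]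
    by unfold_locales (auto simp: strict_sorted_iff)
qed

lemma area_seq_eta:
  assumes dyck: "is_kdyck k p" and pos: "\<forall>x \<in> set k. 0 < x" and ne: "k \<noteq> []"
  shows "area_seq k p ! 0 = 0"
    and "\<And>j i r. j < length k \<Longrightarrow> i < length k \<Longrightarrow> r < length (eta k p ! i) \<Longrightarrow>
      eta k p ! i ! r = hd (eta k p ! j) - 1 \<Longrightarrow> area_seq k p ! j = area_seq k p ! i + int (k ! i) - int r"
proof -
  interpret fill_invariant k p "length p" "eta k p"
    using eta_fill_invariant[OF dyck pos] .
  have area: "area_seq k p ! c = start_rank k p (hd (eta k p ! c) - 1)" if "c < length k" for c
  proof -
    have "hd (eta k p ! c) - 1 < length p"
      using hd_col_S_count(3,4)[OF dyck order.refl, of c] that kdyck_S_count_length[OF dyck] by simp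
    then show ?thesis
      using area_seq_nth[OF dyck _ hd_col_S] that kdyck_S_count_length[OF dyck] by simp
  qed
  show "area_seq k p ! 0 = 0"
    using area_seq_nth[OF dyck kdyck_nth_0[OF dyck ne]] by simp
  show "area_seq k p ! j = area_seq k p ! i + int (k ! i) - int r"
    if "j < length k" "i < length k" "r < length (eta k p ! i)" "eta k p ! i ! r = hd (eta k p ! j) - 1" for j i r
    using that area col_rank by metis
qed

lemma depth_seq_eta:
  assumes dyck: "is_kdyck k p" and pos: "\<forall>x \<in> set k. 0 < x" and ne: "k \<noteq> []"
  shows "depth_seq k p ! 0 = 0"
    and "\<And>j i r. 1 \<le> j \<Longrightarrow> j < length k \<Longrightarrow> i < length k \<Longrightarrow> r < length (eta k p ! i) \<Longrightarrow>
      eta k p ! i ! r = hd (eta k p ! j) - 1 \<Longrightarrow> depth_seq k p ! j = depth_seq k p ! i + r"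
  using parent_columns.gamma_heads[OF eta_parent_columns[OF dyck pos] ne] ne
  unfolding depth_seq_def by simp_all

theorem lemma4p13:
  fixes k :: "nat list" and \<pi> :: "letter list"
  assumes pos: "\<forall>x \<in> set k. x > 0"
    and ne: "k \<noteq> []"
    and dyck: "is_kdyck k \<pi>"
  defines "F \<equiv> eta k \<pi>"
    and "a \<equiv> area_seq k \<pi>"
    and "d \<equiv> depth_seq k \<pi>"
  shows "a ! 0 = 0 \<and> d ! 0 = 0 \<and>
    (\<forall>j. 1 \<le> j \<and> j < length k \<longrightarrow>
       (\<exists>i < length k. hd (F ! j) - 1 \<in> set (F ! i)) \<and>
       (\<forall>i m. i < length k \<and> 1 \<le> m \<and> m \<le> length (F ! i) \<and>
              F ! i ! (m - 1) = hd (F ! j) - 1 \<longrightarrow>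
          a ! j = a ! i + int (k ! i) - int m + 1 \<and>
          d ! j = d ! i + m - 1))"
proof -
  note area = area_seq_eta[OF dyck pos ne, folded F_def a_def]
  note depth = depth_seq_eta[OF dyck pos ne, folded F_def d_def]
  show ?thesis
  proof (intro conjI allI impI)
    show "a ! 0 = 0" and "d ! 0 = 0"
      using area depth by simp_all
  next
    fix j assume "1 \<le> j \<and> j < length k"
    then show "\<exists>i < length k. hd (F ! j) - 1 \<in> set (F ! i)"
      using parent_columns.parent_col[OF eta_parent_columns[OF dyck pos]] unfolding F_def
      by (meson order.strict_trans)
  next
    fix j i m assume j: "1 \<le> j \<and> j < length k"
      and im: "i < length k \<and> 1 \<le> m \<and> m \<le> length (F ! i) \<and> F ! i ! (m - 1) = hd (F ! j) - 1"
    then have row: "m - 1 < length (F ! i)"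
      by linarith
    show "a ! j = a ! i + int (k ! i) - int m + 1"
      using area(2)[OF _ _ row] j im by (simp add: of_nat_diff)
    show "d ! j = d ! i + m - 1"
      using depth(2)[OF _ _ _ row] j im by simp
  qed
qed

end
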